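(* Let $S_{r,N}$ be an atomic exponential Puiseux semiring. Then $\rho(S_{r,N})=1$ if $r\in\mathbb{N}$, and $\rho(S_{r,N})=\infty$ if $r\notin\mathbb{N}$.
   Context: A numerical monoid $N$ is an additive submonoid of $\mathbb{N}=\{0,1,2,\dots\}$ with finite complement. The exponential Puiseux semiring $S_{r,N}$ ($r\in\mathbb{Q}_{>0}$) is the additive submonoid of $\mathbb{Q}_{\ge0}$ generated by $\{r^k:k\in N\}$. For an atomic monoid $M$ with sets of lengths $\mathsf{L}(x)$, set $\rho(0)=1$, $\rho(x)=\sup\mathsf{L}(x)/\inf\mathsf{L}(x)$ for $x\neq0$, and the elasticity $\rho(M)=\sup\{\rho(x):x\in M\}$. *)

theory Defs
  imports Complex_Main "HOL-Library.Multiset" "HOL-Library.Extended_Real"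
begin

definition numerical_monoid :: "nat set \<Rightarrow> bool" where
  "numerical_monoid N \<longleftrightarrow> 0 \<in> N \<and> (\<forall>a\<in>N. \<forall>b\<in>N. a + b \<in> N) \<and> finite (UNIV - N)"

inductive_set exp_puiseux :: "rat \<Rightarrow> nat set \<Rightarrow> rat set" for r :: rat and N :: "nat set" where
  zero: "0 \<in> exp_puiseux r N"
| add_gen: "k \<in> N \<Longrightarrow> x \<in> exp_puiseux r N \<Longrightarrow> r ^ k + x \<in> exp_puiseux r N"

text \<open>Atoms of a submonoid M of (Q_{>=0},+); its only unit is 0.\<close>
definition atoms :: "rat set \<Rightarrow> rat set" where
  "atoms M = {a \<in> M. a \<noteq> 0 \<and> (\<forall>x\<in>M. \<forall>y\<in>M. a = x + y \<longrightarrow> x = 0 \<or> y = 0)}"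

definition factorizations :: "rat set \<Rightarrow> rat \<Rightarrow> rat multiset set" where
  "factorizations M x = {z. set_mset z \<subseteq> atoms M \<and> sum_mset z = x}"

definition lengths :: "rat set \<Rightarrow> rat \<Rightarrow> nat set" where
  "lengths M x = size ` factorizations M x"

definition atomic :: "rat set \<Rightarrow> bool" where
  "atomic M \<longleftrightarrow> (\<forall>x\<in>M. x \<noteq> 0 \<longrightarrow> factorizations M x \<noteq> {})"

definition elasticity_elem :: "rat set \<Rightarrow> rat \<Rightarrow> ereal" where
  "elasticity_elem M x = (if x = 0 then 1 else
     (SUP l\<in>lengths M x. ereal (real l)) / (INF l\<in>lengths M x. ereal (real l)))"

definition elasticity :: "rat set \<Rightarrow> ereal" where
  "elasticity M = (SUP x\<in>M. elasticity_elem M x)"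

end

theory Submission
  imports Defs
begin

text \<open>If \<open>r\<close> is an integer, the semiring is \<open>\<nat>\<close> itself (as \<open>1 = r^0\<close> is a generator),
  whose only atom is \<open>1\<close>, so every element has a single factorization length.

  Otherwise write \<open>r = a/b\<close> in lowest terms, so \<open>b \<ge> 2\<close>. An equation \<open>r^k = r^j1 + ... + r^jm\<close>
  with all \<open>j < k\<close> is impossible: after multiplying by \<open>b^k\<close> every term on the right is divisible
  by \<open>b\<close>, whereas \<open>a^k\<close> is coprime to \<open>b\<close>; when all \<open>j > k\<close> and \<open>a \<ge> 2\<close> the same
  holds for \<open>1/r\<close> after reflecting the exponents. For \<open>a = 1\<close> the semiring is not atomic, because
  beyond the conductor \<open>C\<close> of \<open>N\<close> every \<open>r^j = b r^(j+1)\<close> splits and so \<open>r^C\<close> would be a sum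
  of lower powers. Hence \<open>a \<ge> 2\<close>, and then every generator \<open>r^k\<close> is an atom, since splitting it
  yields a sum of at least two powers that are all smaller, hence all of lower exponent if
  \<open>r > 1\<close> and all of higher exponent if \<open>r < 1\<close>. Finally \<open>a^n r^C = b^n r^(C+n)\<close> has
  factorizations of lengths \<open>a^n\<close> and \<open>b^n\<close>, so the elasticity is unbounded.\<close>

lemma exp_puiseux_iff_sum_mset:
  "x \<in> exp_puiseux r N \<longleftrightarrow> (\<exists>c. set_mset c \<subseteq> N \<and> x = (\<Sum>j\<in>#c. r ^ j))"
proof
  assume "x \<in> exp_puiseux r N"
  then show "\<exists>c. set_mset c \<subseteq> N \<and> x = (\<Sum>j\<in>#c. r ^ j)"
  proof (induction rule: exp_puiseux.induct)
    case zero
    show ?case by (intro exI[of _ "{#}"]) simp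
  next
    case (add_gen k x)
    then obtain c where "set_mset c \<subseteq> N" "x = (\<Sum>j\<in>#c. r ^ j)" by blast
    with add_gen.hyps show ?case by (intro exI[of _ "add_mset k c"]) simp
  qed
next
  assume "\<exists>c. set_mset c \<subseteq> N \<and> x = (\<Sum>j\<in>#c. r ^ j)"
  then obtain c where "set_mset c \<subseteq> N" "x = (\<Sum>j\<in>#c. r ^ j)" by blast
  then show "x \<in> exp_puiseux r N"
    by (induction c arbitrary: x) (auto intro: exp_puiseux.intros)
qed

lemma sum_mset_powers_in_exp_puiseux:
  "set_mset c \<subseteq> N \<Longrightarrow> (\<Sum>j\<in>#c. r ^ j) \<in> exp_puiseux r N"
  using exp_puiseux_iff_sum_mset by blast

lemma power_in_exp_puiseux: "k \<in> N \<Longrightarrow> r ^ k \<in> exp_puiseux r N"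
  using sum_mset_powers_in_exp_puiseux[of "{#k#}"] by simp

lemma sum_mset_powers_pos:
  fixes r :: "'a :: linordered_semidom"
  shows "r > 0 \<Longrightarrow> c \<noteq> {#} \<Longrightarrow> (\<Sum>j\<in>#c. r ^ j) > 0"
proof (induction c)
  case (add j c)
  then show ?case by (cases "c = {#}") (auto intro: add_pos_pos)
qed simp

lemma power_lt_sum_mset_powers:
  fixes r :: "'a :: linordered_semidom"
  assumes "r > 0" "j \<in># c" "size c \<ge> 2"
  shows "r ^ j < (\<Sum>i\<in>#c. r ^ i)"
proof -
  obtain c' where c: "c = add_mset j c'" using multi_member_split[OF assms(2)] by blast
  with assms(3) have "c' \<noteq> {#}" by auto
  then have "(\<Sum>i\<in>#c'. r ^ i) > 0" using sum_mset_powers_pos assms(1) by blast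
  then show ?thesis using c by simp
qed

lemma dvd_sum_mset:
  fixes d :: "'a :: comm_semiring_1"
  shows "(\<And>x. x \<in># A \<Longrightarrow> d dvd f x) \<Longrightarrow> d dvd (\<Sum>x\<in>#A. f x)"
  by (induction A) auto

lemma mset_image_preimage:
  assumes "set_mset z \<subseteq> f ` A"
  obtains c where "set_mset c \<subseteq> A" "z = image_mset f c"
proof -
  from assms have "\<exists>c. set_mset c \<subseteq> A \<and> z = image_mset f c"
  proof (induction z)
    case empty
    show ?case by simp
  next
    case (add u z)
    then obtain c where "set_mset c \<subseteq> A" "z = image_mset f c" by auto
    moreover obtain i where "i \<in> A" "u = f i" using add.prems by auto
    ultimately show ?case by (intro exI[of _ "add_mset i c"]) simp
  qed
  with that show ?thesis by blast
qed

lemma numerical_monoid_conductor: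
  assumes "numerical_monoid N"
  obtains C where "\<forall>k\<ge>C. k \<in> N"
proof -
  have "finite (UNIV - N)" using assms unfolding numerical_monoid_def by blast
  then obtain C where "\<forall>k\<in>UNIV - N. k < C" using finite_nat_set_iff_bounded by blast
  then have "\<forall>k\<ge>C. k \<in> N" by (auto simp: not_less[symmetric])
  then show ?thesis by (rule that)
qed

lemma pos_rat_eq_coprime_fraction:
  assumes "(r :: rat) > 0"
  obtains a b :: nat where "r = of_nat a / of_nat b" "coprime a b" "a > 0" "b > 0"
proof -
  obtain p q where pq: "quotient_of r = (p, q)" by fastforce
  have "q > 0" "r = of_int p / of_int q" "coprime p q"
    using quotient_of_denom_pos[OF pq] quotient_of_div[OF pq] quotient_of_coprime[OF pq] by auto
  moreover from this assms have "p > 0" by (simp add: zero_less_divide_iff)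
  ultimately show ?thesis
    using that[of "nat p" "nat q"] by (simp add: coprime_int_iff[symmetric])
qed

lemma power_in_atoms_exp_puiseux:
  assumes "r > 0" "k \<in> N"
    and no_split: "\<And>c. set_mset c \<subseteq> N \<Longrightarrow> size c \<ge> 2 \<Longrightarrow> r ^ k \<noteq> (\<Sum>j\<in>#c. r ^ j)"
  shows "r ^ k \<in> atoms (exp_puiseux r N)"
  unfolding atoms_def
proof (intro CollectI conjI ballI impI power_in_exp_puiseux[OF assms(2)])
  show "r ^ k \<noteq> 0" using assms(1) by simp
next
  fix x y assume xy: "x \<in> exp_puiseux r N" "y \<in> exp_puiseux r N" "r ^ k = x + y"
  show "x = 0 \<or> y = 0"
  proof (rule ccontr)
    assume "\<not> (x = 0 \<or> y = 0)"
    obtain cx where cx: "set_mset cx \<subseteq> N" "x = (\<Sum>j\<in>#cx. r ^ j)"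
      using xy(1) exp_puiseux_iff_sum_mset by blast
    obtain cy where cy: "set_mset cy \<subseteq> N" "y = (\<Sum>j\<in>#cy. r ^ j)"
      using xy(2) exp_puiseux_iff_sum_mset by blast
    have "cx \<noteq> {#}" "cy \<noteq> {#}" using cx cy \<open>\<not> (x = 0 \<or> y = 0)\<close> by auto
    then have "size cx > 0" "size cy > 0" by (simp_all add: nonempty_has_size)
    then have "size (cx + cy) \<ge> 2" by simp
    moreover have "r ^ k = (\<Sum>j\<in>#cx + cy. r ^ j)" using xy(3) cx cy by simp
    ultimately show False using no_split[of "cx + cy"] cx cy by simp
  qed
qed

lemma coprime_fraction_power_ne_sum_lower_powers:
  fixes a b :: nat
  assumes "coprime a b" "b \<ge> 2" "\<forall>j\<in>#c. j < k"
  shows "(of_nat a / of_nat b :: 'a :: field_char_0) ^ k \<noteq> (\<Sum>j\<in>#c. (of_nat a / of_nat b) ^ j)"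
proof
  let ?r = "of_nat a / of_nat b :: 'a"
  assume eq: "?r ^ k = (\<Sum>j\<in>#c. ?r ^ j)"
  have scaled: "?r ^ j * of_nat b ^ k = of_nat (a ^ j * b ^ (k - j))" if "j \<le> k" for j
  proof -
    have "(of_nat b :: 'a) ^ k = of_nat b ^ j * of_nat b ^ (k - j)"
      using that by (simp flip: power_add)
    then show ?thesis using assms(2) by (simp add: power_divide)
  qed
  have "(of_nat (a ^ k) :: 'a) = ?r ^ k * of_nat b ^ k" using scaled[of k] by simp
  also have "\<dots> = (\<Sum>j\<in>#c. ?r ^ j * of_nat b ^ k)" by (simp add: eq sum_mset_distrib_right)
  also have "\<dots> = (\<Sum>j\<in>#c. of_nat (a ^ j * b ^ (k - j)))"
    using assms(3) by (intro arg_cong[where f = sum_mset] image_mset_cong) (simp add: scaled less_imp_le)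
  also have "\<dots> = of_nat (\<Sum>j\<in>#c. a ^ j * b ^ (k - j))" by (simp add: multiset.map_comp o_def)
  finally have "a ^ k = (\<Sum>j\<in>#c. a ^ j * b ^ (k - j))" by (simp only: of_nat_eq_iff)
  moreover have "b dvd (\<Sum>j\<in>#c. a ^ j * b ^ (k - j))"
  proof (rule dvd_sum_mset)
    fix j assume "j \<in># c"
    with assms(3) have "k - j = Suc (k - j - 1)" by fastforce
    then show "b dvd a ^ j * b ^ (k - j)" by (metis dvd_mult dvd_triv_left power_Suc)
  qed
  ultimately have "b dvd a ^ k" by simp
  moreover have "coprime (a ^ k) b" using assms(1) by simp
  ultimately have "is_unit b" using coprime_absorb_right by blast
  with assms(2) show False by simp
qed

text \<open>Multiplying by \<open>(b/a)^M\<close>, with \<open>M\<close> the largest exponent, reflects the exponents and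
  reduces this to the previous lemma for the reciprocal fraction.\<close>
lemma coprime_fraction_power_ne_sum_higher_powers:
  fixes a b :: nat
  assumes "coprime a b" "a \<ge> 2" "c \<noteq> {#}" "\<forall>j\<in>#c. k < j"
  shows "(of_nat a / of_nat b :: 'a :: field_char_0) ^ k \<noteq> (\<Sum>j\<in>#c. (of_nat a / of_nat b) ^ j)"
proof
  let ?r = "of_nat a / of_nat b :: 'a" and ?s = "of_nat b / of_nat a :: 'a"
  assume eq: "?r ^ k = (\<Sum>j\<in>#c. ?r ^ j)"
  define M where "M = Max (set_mset c)"
  have jM: "j \<le> M" if "j \<in># c" for j using that unfolding M_def by simp
  have kM: "k < M" using assms(3,4) jM by (meson multiset_nonemptyE order_less_le_trans)
  have "b \<noteq> 0" using assms(1,2) by (cases b) auto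
  then have rs: "?r * ?s = 1" using assms(2) by simp
  have reflect: "?r ^ j * ?s ^ M = ?s ^ (M - j)" if "j \<le> M" for j
  proof -
    have "?r ^ j * ?s ^ M = ?r ^ j * (?s ^ j * ?s ^ (M - j))"
      using that by (simp flip: power_add)
    also have "\<dots> = (?r * ?s) ^ j * ?s ^ (M - j)"
      by (simp only: power_mult_distrib mult.assoc)
    finally show ?thesis using rs by simp
  qed
  have "?s ^ (M - k) = (\<Sum>j\<in>#c. ?r ^ j * ?s ^ M)"
    using reflect[of k] kM by (simp add: eq sum_mset_distrib_right)
  also have "\<dots> = (\<Sum>j\<in>#c. ?s ^ (M - j))"
    using jM reflect by (intro arg_cong[where f = sum_mset] image_mset_cong) simp
  also have "\<dots> = (\<Sum>i\<in>#image_mset (\<lambda>j. M - j) c. ?s ^ i)" by (simp add: multiset.map_comp o_def)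
  finally show False
    using coprime_fraction_power_ne_sum_lower_powers[of b a "image_mset (\<lambda>j. M - j) c" "M - k"]
      assms jM by (fastforce simp: coprime_commute)
qed

lemma coprime_fraction_power_in_atoms:
  fixes a b :: nat
  assumes "coprime a b" "a \<ge> 2" "b \<ge> 2" "k \<in> N"
  shows "(of_nat a / of_nat b) ^ k \<in> atoms (exp_puiseux (of_nat a / of_nat b) N)"
proof (rule power_in_atoms_exp_puiseux)
  let ?r = "of_nat a / of_nat b :: rat"
  show "?r > 0" using assms by simp
  fix c assume c: "set_mset c \<subseteq> N" "size c \<ge> 2"
  show "?r ^ k \<noteq> (\<Sum>j\<in>#c. ?r ^ j)"
  proof
    assume eq: "?r ^ k = (\<Sum>j\<in>#c. ?r ^ j)"
    then have lt: "?r ^ j < ?r ^ k" if "j \<in># c" for j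
      using power_lt_sum_mset_powers[OF \<open>?r > 0\<close> that c(2)] by simp
    have "a \<noteq> b" using assms(1,2) by auto
    then consider "a > b" | "a < b" by linarith
    then show False
    proof cases
      case 1
      then have "?r > 1" using assms(3) by simp
      then have "\<forall>j\<in>#c. j < k" using lt by (simp add: power_strict_increasing_iff)
      then show False using coprime_fraction_power_ne_sum_lower_powers[OF assms(1,3)] eq by blast
    next
      case 2
      then have "?r < 1" using assms(3) by simp
      then have "\<forall>j\<in>#c. k < j"
        using lt \<open>?r > 0\<close> by (simp add: power_strict_decreasing_iff)
      moreover have "c \<noteq> {#}" using c(2) by auto
      ultimately show False using coprime_fraction_power_ne_sum_higher_powers[OF assms(1,2)] eq by blast
    qed
  qed
qed (use assms in auto)

lemma atoms_exp_puiseux_subset_powers: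
  assumes "r > 0"
  shows "atoms (exp_puiseux r N) \<subseteq> (\<lambda>k. r ^ k) ` N"
proof
  fix u assume u: "u \<in> atoms (exp_puiseux r N)"
  then obtain c where c: "set_mset c \<subseteq> N" "u = (\<Sum>j\<in>#c. r ^ j)"
    unfolding atoms_def exp_puiseux_iff_sum_mset by blast
  have "c \<noteq> {#}" using u c unfolding atoms_def by auto
  then obtain j c' where jc: "c = add_mset j c'" by (metis multiset_cases)
  have "c' = {#}"
  proof (rule ccontr)
    assume "c' \<noteq> {#}"
    then have "(\<Sum>i\<in>#c'. r ^ i) > 0" by (rule sum_mset_powers_pos[OF assms])
    then have "(\<Sum>i\<in>#c'. r ^ i) \<noteq> 0" by simp
    moreover have "r ^ j \<in> exp_puiseux r N" "(\<Sum>i\<in>#c'. r ^ i) \<in> exp_puiseux r N"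
      using c jc by (auto intro: power_in_exp_puiseux sum_mset_powers_in_exp_puiseux)
    moreover have "u = r ^ j + (\<Sum>i\<in>#c'. r ^ i)" "r ^ j \<noteq> 0" using c jc assms by simp_all
    ultimately show False using u unfolding atoms_def by blast
  qed
  then show "u \<in> (\<lambda>k. r ^ k) ` N" using c jc by simp
qed

lemma reciprocal_power_not_in_atoms:
  assumes "b \<ge> 2" "Suc j \<in> N"
  shows "(1 / of_nat b) ^ j \<notin> atoms (exp_puiseux (1 / of_nat b) N)"
proof
  let ?r = "1 / of_nat b :: rat" and ?rest = "(\<Sum>i\<in>#replicate_mset (b - 1) (Suc j). (1 / of_nat b :: rat) ^ i)"
  assume atom: "?r ^ j \<in> atoms (exp_puiseux ?r N)"
  have b_split: "of_nat b * x = x + of_nat (b - 1) * x" for x :: rat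
    using assms(1) by (simp add: of_nat_diff algebra_simps)
  have "?r ^ j = of_nat b * ?r ^ Suc j" using assms(1) by simp
  also have "\<dots> = ?r ^ Suc j + ?rest" unfolding b_split by simp
  finally have split: "?r ^ j = ?r ^ Suc j + ?rest" .
  have "?r ^ Suc j \<in> exp_puiseux ?r N" "?rest \<in> exp_puiseux ?r N"
    using assms(2) by (rule power_in_exp_puiseux, intro sum_mset_powers_in_exp_puiseux) simp
  moreover have "?r ^ Suc j \<noteq> 0" "?rest \<noteq> 0" using assms(1) by auto
  ultimately show False using atom split unfolding atoms_def by blast
qed

lemma reciprocal_exp_puiseux_not_atomic:
  assumes "b \<ge> 2" and conductor: "\<forall>k\<ge>C. k \<in> N"
  shows "\<not> atomic (exp_puiseux (1 / of_nat b) N)"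
proof
  let ?r = "1 / of_nat b :: rat"
  assume "atomic (exp_puiseux ?r N)"
  moreover have "?r ^ C \<in> exp_puiseux ?r N" using conductor by (simp add: power_in_exp_puiseux)
  moreover have "?r ^ C \<noteq> 0" using assms(1) by simp
  ultimately obtain z where z: "set_mset z \<subseteq> atoms (exp_puiseux ?r N)" "sum_mset z = ?r ^ C"
    unfolding atomic_def factorizations_def by blast
  have "atoms (exp_puiseux ?r N) \<subseteq> (\<lambda>k. ?r ^ k) ` {k. k < C}"
  proof
    fix u assume u: "u \<in> atoms (exp_puiseux ?r N)"
    then obtain k where k: "k \<in> N" "u = ?r ^ k"
      using atoms_exp_puiseux_subset_powers[of ?r N] assms(1) by auto
    have "k < C"
    proof (rule ccontr)
      assume "\<not> k < C"
      then have "Suc k \<in> N" using conductor by simp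
      then show False using reciprocal_power_not_in_atoms[OF assms(1)] u k(2) by blast
    qed
    with k show "u \<in> (\<lambda>k. ?r ^ k) ` {k. k < C}" by blast
  qed
  with z(1) have "set_mset z \<subseteq> (\<lambda>k. ?r ^ k) ` {k. k < C}" by (rule subset_trans)
  then obtain c where c: "set_mset c \<subseteq> {k. k < C}" "z = image_mset (\<lambda>k. ?r ^ k) c"
    by (rule mset_image_preimage)
  then have "\<forall>k\<in>#c. k < C" "?r ^ C = (\<Sum>k\<in>#c. ?r ^ k)" using z(2) by auto
  then show False using coprime_fraction_power_ne_sum_lower_powers[of 1 b c C, where 'a = rat] assms(1)
    by simp
qed

lemma replicate_atom_in_lengths:
  "u \<in> atoms M \<Longrightarrow> n \<in> lengths M (of_nat n * u)"
  unfolding lengths_def factorizations_def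
  by (intro image_eqI[of _ _ "replicate_mset n u"]) auto

lemma ratio_of_lengths_le_elasticity_elem:
  assumes "x \<noteq> 0" "p \<in> lengths M x" "q \<in> lengths M x"
  shows "ereal (real p / real q) \<le> elasticity_elem M x"
proof -
  let ?L = "lengths M x"
  have positive: "l \<ge> 1" if l: "l \<in> ?L" for l
  proof -
    obtain z where "l = size z" "sum_mset z = x"
      using l unfolding lengths_def factorizations_def by blast
    then show ?thesis using assms(1) by (cases z) auto
  qed
  define I where "I = (INF l\<in>?L. ereal (real l))"
  have "1 \<le> I" "I \<le> ereal (real q)"
    unfolding I_def using positive assms(3) by (auto intro: INF_greatest INF_lower)
  then obtain i where i: "I = ereal i" "1 \<le> i" "i \<le> real q" by (cases I) auto
  have "real p / real q \<le> real p / i" using i by (intro divide_left_mono) auto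
  also have "ereal (real p / i) = ereal (real p) / I" using i by simp
  also have "\<dots> \<le> (SUP l\<in>?L. ereal (real l)) / I"
    using i assms(2) by (intro ereal_divide_right_mono SUP_upper) auto
  finally show ?thesis unfolding elasticity_elem_def I_def using assms(1) by simp
qed

lemma exp_puiseux_elasticity_infinite:
  assumes r: "r = of_nat a / of_nat b" and "a \<ge> 1" "b \<ge> 1" "a \<noteq> b"
    and conductor: "\<forall>k\<ge>C. k \<in> N"
    and atoms: "\<And>k. k \<in> N \<Longrightarrow> r ^ k \<in> atoms (exp_puiseux r N)"
  shows "elasticity (exp_puiseux r N) = \<infinity>"
  unfolding elasticity_def
proof (rule SUP_PInfty)
  fix m :: nat
  define t where "t = real (max a b) / real (min a b)"
  have "t > 1" using assms(2-4) unfolding t_def by (simp add: max_def min_def)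
  then obtain n where n: "real m < t ^ n" using real_arch_pow by blast
  define x where "x = of_nat (a ^ n) * r ^ C"
  have "C \<in> N" "C + n \<in> N" using conductor by auto
  have x_eq: "x = of_nat (b ^ n) * r ^ (C + n)"
    unfolding x_def r using assms(3) by (simp add: power_add power_divide)
  have "a ^ n \<in> lengths (exp_puiseux r N) x"
    unfolding x_def using \<open>C \<in> N\<close> by (intro replicate_atom_in_lengths atoms)
  moreover have "b ^ n \<in> lengths (exp_puiseux r N) x"
    unfolding x_eq using \<open>C + n \<in> N\<close> by (intro replicate_atom_in_lengths atoms)
  ultimately have "max a b ^ n \<in> lengths (exp_puiseux r N) x" "min a b ^ n \<in> lengths (exp_puiseux r N) x"
    by (simp_all add: max_def min_def)
  moreover have "x \<noteq> 0" unfolding x_def r using assms(2,3) by simp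
  ultimately have "ereal (t ^ n) \<le> elasticity_elem (exp_puiseux r N) x"
    using ratio_of_lengths_le_elasticity_elem unfolding t_def by (fastforce simp: power_divide)
  moreover have "x \<in> exp_puiseux r N"
    using sum_mset_powers_in_exp_puiseux[of "replicate_mset (a ^ n) C" N r] \<open>C \<in> N\<close>
    unfolding x_def by simp
  ultimately show "\<exists>x\<in>exp_puiseux r N. ereal (real m) \<le> elasticity_elem (exp_puiseux r N) x"
    using n by (meson ereal_less_eq(3) less_imp_le order_trans)
qed

lemma exp_puiseux_eq_Nats:
  assumes "r \<in> \<nat>" "0 \<in> N"
  shows "exp_puiseux r N = \<nat>"
proof
  obtain m where r: "r = of_nat m" using assms(1) by (auto elim: Nats_cases)
  show "exp_puiseux r N \<subseteq> \<nat>"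
  proof
    fix x assume "x \<in> exp_puiseux r N"
    then show "x \<in> \<nat>"
      by (induction rule: exp_puiseux.induct) (simp_all add: r flip: of_nat_power)
  qed
next
  show "\<nat> \<subseteq> exp_puiseux r N"
  proof
    fix x :: rat assume "x \<in> \<nat>"
    then obtain n where "x = of_nat n" by (auto elim: Nats_cases)
    then show "x \<in> exp_puiseux r N"
      using sum_mset_powers_in_exp_puiseux[of "replicate_mset n 0" N r] assms(2) by simp
  qed
qed

lemma atoms_Nats: "atoms (\<nat> :: rat set) = {1}"
proof (intro set_eqI iffI)
  fix u assume u: "u \<in> atoms \<nat>"
  then obtain n where n: "u = of_nat n" unfolding atoms_def by (auto elim: Nats_cases)
  have irreducible: "\<forall>x\<in>\<nat>. \<forall>y\<in>\<nat>. u = x + y \<longrightarrow> x = 0 \<or> y = 0"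
    using u unfolding atoms_def by blast
  have "n \<noteq> 0" using u n unfolding atoms_def by simp
  moreover have "\<not> n \<ge> 2"
  proof
    assume "n \<ge> 2"
    then have "u = 1 + of_nat (n - 1)" "of_nat (n - 1) \<noteq> (0 :: rat)" using n by (simp_all add: of_nat_diff)
    then show False using irreducible Nats_1 of_nat_in_Nats by (metis one_neq_zero)
  qed
  ultimately show "u \<in> {1}" using n by simp
next
  fix u :: rat assume "u \<in> {1}"
  have "x = 0 \<or> y = 0" if xy: "x \<in> \<nat>" "y \<in> \<nat>" "1 = x + y" for x y :: rat
  proof -
    obtain i j where ij: "x = of_nat i" "y = of_nat j" using xy(1,2) by (auto elim!: Nats_cases)
    with xy(3) have "i + j = 1" by (metis of_nat_1 of_nat_add of_nat_eq_iff)
    then show ?thesis using ij by auto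
  qed
  with \<open>u \<in> {1}\<close> show "u \<in> atoms \<nat>" unfolding atoms_def by auto
qed

lemma factorizations_Nats: "factorizations (\<nat> :: rat set) (of_nat n) = {replicate_mset n 1}"
proof (intro set_eqI iffI)
  fix z assume "z \<in> factorizations \<nat> (of_nat n)"
  then have z: "set_mset z \<subseteq> {1}" "sum_mset z = (of_nat n :: rat)"
    unfolding factorizations_def atoms_Nats by auto
  obtain m where "z = replicate_mset m 1" using set_mset_subset_singletonD[OF z(1)] by blast
  moreover from this z(2) have "m = n" by simp
  ultimately show "z \<in> {replicate_mset n 1}" by simp
qed (auto simp: factorizations_def atoms_Nats)

lemma elasticity_Nats: "elasticity (\<nat> :: rat set) = 1"
proof -
  have "elasticity_elem \<nat> x = 1" if x: "x \<in> \<nat>" for x :: rat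
  proof -
    obtain n where "x = of_nat n" using x by (auto elim: Nats_cases)
    then show ?thesis
      by (cases "n = 0") (simp_all add: elasticity_elem_def lengths_def factorizations_Nats)
  qed
  then show ?thesis unfolding elasticity_def by (simp add: Nats_0)
qed

theorem mainTheorem6:
  fixes r :: rat and N :: "nat set"
  assumes "numerical_monoid N" and "r > 0" and "atomic (exp_puiseux r N)"
  shows "(r \<in> \<nat> \<longrightarrow> elasticity (exp_puiseux r N) = 1) \<and>
         (r \<notin> \<nat> \<longrightarrow> elasticity (exp_puiseux r N) = \<infinity>)"
proof (intro conjI impI)
  assume "r \<in> \<nat>"
  moreover have "0 \<in> N" using assms(1) unfolding numerical_monoid_def by blast
  ultimately show "elasticity (exp_puiseux r N) = 1" by (simp add: exp_puiseux_eq_Nats elasticity_Nats)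
next
  assume non_integer: "r \<notin> \<nat>"
  obtain a b where r: "r = of_nat a / of_nat b" and "coprime a b" "a > 0" "b > 0"
    using pos_rat_eq_coprime_fraction[OF assms(2)] .
  obtain C where conductor: "\<forall>k\<ge>C. k \<in> N" using numerical_monoid_conductor[OF assms(1)] .
  have "b \<ge> 2" using non_integer \<open>b > 0\<close> r by (cases "b = 1") auto
  moreover have "a \<ge> 2"
    using reciprocal_exp_puiseux_not_atomic[OF \<open>b \<ge> 2\<close> conductor] assms(3) r \<open>a > 0\<close>
    by (cases "a = 1") auto
  moreover have "a \<noteq> b" using \<open>coprime a b\<close> \<open>b \<ge> 2\<close> by auto
  ultimately show "elasticity (exp_puiseux r N) = \<infinity>"
    using exp_puiseux_elasticity_infinite[OF r _ _ _ conductor] coprime_fraction_power_in_atoms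
      \<open>coprime a b\<close> unfolding r by simp
qed

end
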